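(* Let $(R,\mathfrak m)$ be a Noetherian local ring, $X$ a finitely generated $R$-module, $N$ a Burch submodule of $X$, $t\ge1$ an integer, and $M$ a finitely generated $R$-module such that either (1) $\operatorname{Tor}_t^R(M,N)=\operatorname{Tor}_{t-1}^R(M,N)=0$, or (2) $\operatorname{Ext}^{t+1}_R(M,N)=\operatorname{Ext}^t_R(M,N)=0$. Then $\operatorname{pd}_R M<t$.
   Context: $\operatorname{Tor}_0^R(M,N)=M\otimes_RN$. For a submodule $N\subseteq X$, $(N:_X\mathfrak m)=\{x\in X:\mathfrak m x\subseteq N\}$. $N$ is a Burch submodule of $X$ if $\mathfrak m(N:_X\mathfrak m)\neq\mathfrak m N$. The projective dimension of the zero module is $-\infty$. *)

theory Defs
  imports Complex_Main
begin

text \<open>The maximal ideal of a local ring: the set of non-units.\<close>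
definition maxid :: "'a::comm_ring_1 set" where
  "maxid = {x. \<not> x dvd 1}"

definition local_ring :: "'a::comm_ring_1 itself \<Rightarrow> bool" where
  "local_ring _ \<longleftrightarrow> (0::'a) \<noteq> 1 \<and>
     (\<forall>x y::'a. x \<in> maxid \<longrightarrow> y \<in> maxid \<longrightarrow> x + y \<in> maxid)"

definition noetherian_ring :: "'a::comm_ring_1 itself \<Rightarrow> bool" where
  "noetherian_ring _ \<longleftrightarrow>
     (\<forall>I::'a set. module.subspace (*) I \<longrightarrow>
        (\<exists>S. finite S \<and> S \<subseteq> I \<and> module.span (*) S = I))"

definition fin_gen :: "('a::comm_ring_1 \<Rightarrow> 'b::ab_group_add \<Rightarrow> 'b) \<Rightarrow> bool" where
  "fin_gen sc \<longleftrightarrow> (\<exists>S. finite S \<and> module.span sc S = UNIV)"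

definition ideal_times :: "('a::comm_ring_1 \<Rightarrow> 'b::ab_group_add \<Rightarrow> 'b) \<Rightarrow> 'a set \<Rightarrow> 'b set \<Rightarrow> 'b set" where
  "ideal_times sc I L = module.span sc {sc r x | r x. r \<in> I \<and> x \<in> L}"

definition colon_max :: "('a::comm_ring_1 \<Rightarrow> 'b::ab_group_add \<Rightarrow> 'b) \<Rightarrow> 'b set \<Rightarrow> 'b set" where
  "colon_max sc N = {x. \<forall>r\<in>maxid. sc r x \<in> N}"

definition burch_submodule :: "('a::comm_ring_1 \<Rightarrow> 'b::ab_group_add \<Rightarrow> 'b) \<Rightarrow> 'b set \<Rightarrow> bool" where
  "burch_submodule sc N \<longleftrightarrow> module.subspace sc N \<and>
     ideal_times sc maxid (colon_max sc N) \<noteq> ideal_times sc maxid N"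

text \<open>Elements of R^n: functions nat => 'a vanishing from index n on.\<close>
definition fvec :: "nat \<Rightarrow> (nat \<Rightarrow> 'a::zero) set" where
  "fvec n = {v. \<forall>k\<ge>n. v k = 0}"

text \<open>Elements of N^n for a subset N.\<close>
definition ftup :: "'b set \<Rightarrow> nat \<Rightarrow> (nat \<Rightarrow> 'b::zero) set" where
  "ftup N n = {y. (\<forall>k. y k \<in> N) \<and> (\<forall>k\<ge>n. y k = 0)}"

text \<open>Differential d_i : R^(b i) -> R^(b (i-1)), given by matrix d i (row j, column k), i >= 1.\<close>
definition dmap :: "(nat \<Rightarrow> nat) \<Rightarrow> (nat \<Rightarrow> nat \<Rightarrow> nat \<Rightarrow> 'a::comm_ring_1) \<Rightarrow> nat \<Rightarrow> (nat \<Rightarrow> 'a) \<Rightarrow> nat \<Rightarrow> 'a" where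
  "dmap b d i v = (\<lambda>j. if j < b (i - 1) then (\<Sum>k<b i. d i j k * v k) else 0)"

text \<open>Augmentation R^(b 0) -> M sending the k-th basis vector to g k.\<close>
definition augm :: "('a::comm_ring_1 \<Rightarrow> 'n::ab_group_add \<Rightarrow> 'n) \<Rightarrow> (nat \<Rightarrow> nat) \<Rightarrow> (nat \<Rightarrow> 'n) \<Rightarrow> (nat \<Rightarrow> 'a) \<Rightarrow> 'n" where
  "augm sM b g v = (\<Sum>k<b 0. sM (v k) (g k))"

text \<open>A resolution ... -> R^(b 1) -> R^(b 0) -> M -> 0 of M by finite free modules
  (M is the whole type 'n with scalar multiplication sM).\<close>
definition free_resolution :: "('a::comm_ring_1 \<Rightarrow> 'n::ab_group_add \<Rightarrow> 'n) \<Rightarrow> (nat \<Rightarrow> nat)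
    \<Rightarrow> (nat \<Rightarrow> nat \<Rightarrow> nat \<Rightarrow> 'a) \<Rightarrow> (nat \<Rightarrow> 'n) \<Rightarrow> bool" where
  "free_resolution sM b d g \<longleftrightarrow>
     (\<forall>m. \<exists>v\<in>fvec (b 0). augm sM b g v = m) \<and>
     (\<forall>v\<in>fvec (b 0). augm sM b g v = 0 \<longleftrightarrow> (\<exists>w\<in>fvec (b 1). v = dmap b d 1 w)) \<and>
     (\<forall>i\<ge>1. \<forall>v\<in>fvec (b i). dmap b d i v = (\<lambda>_. 0) \<longleftrightarrow> (\<exists>w\<in>fvec (b (Suc i)). v = dmap b d (Suc i) w))"

text \<open>d_i tensor N : N^(b i) -> N^(b (i-1)), i >= 1.\<close>
definition tor_map :: "('a::comm_ring_1 \<Rightarrow> 'x::ab_group_add \<Rightarrow> 'x) \<Rightarrow> (nat \<Rightarrow> nat)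
    \<Rightarrow> (nat \<Rightarrow> nat \<Rightarrow> nat \<Rightarrow> 'a) \<Rightarrow> nat \<Rightarrow> (nat \<Rightarrow> 'x) \<Rightarrow> nat \<Rightarrow> 'x" where
  "tor_map sX b d i y = (\<lambda>j. if j < b (i - 1) then (\<Sum>k<b i. sX (d i j k) (y k)) else 0)"

text \<open>Hom(d_i, N) : N^(b (i-1)) -> N^(b i), i >= 1.\<close>
definition ext_map :: "('a::comm_ring_1 \<Rightarrow> 'x::ab_group_add \<Rightarrow> 'x) \<Rightarrow> (nat \<Rightarrow> nat)
    \<Rightarrow> (nat \<Rightarrow> nat \<Rightarrow> nat \<Rightarrow> 'a) \<Rightarrow> nat \<Rightarrow> (nat \<Rightarrow> 'x) \<Rightarrow> nat \<Rightarrow> 'x" where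
  "ext_map sX b d i y = (\<lambda>k. if k < b i then (\<Sum>j<b (i - 1). sX (d i j k) (y j)) else 0)"

text \<open>Tor_i^R(M,N) = 0 (homology of F tensor N at degree i; the map out of degree 0 is zero).
  Computed with respect to every finite free resolution of M (all give isomorphic Tor).\<close>
definition Tor_vanishes :: "('a::comm_ring_1 \<Rightarrow> 'n::ab_group_add \<Rightarrow> 'n) \<Rightarrow>
    ('a \<Rightarrow> 'x::ab_group_add \<Rightarrow> 'x) \<Rightarrow> 'x set \<Rightarrow> nat \<Rightarrow> bool" where
  "Tor_vanishes sM sX N i \<longleftrightarrow>
     (\<forall>b d g. free_resolution sM b d g \<longrightarrow>
        (\<forall>y\<in>ftup N (b i). (i = 0 \<or> tor_map sX b d i y = (\<lambda>_. 0)) \<longrightarrow>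
           (\<exists>z\<in>ftup N (b (Suc i)). y = tor_map sX b d (Suc i) z)))"

text \<open>Ext^i_R(M,N) = 0 (cohomology of Hom(F,N) at degree i; the map into degree 0 is zero).\<close>
definition Ext_vanishes :: "('a::comm_ring_1 \<Rightarrow> 'n::ab_group_add \<Rightarrow> 'n) \<Rightarrow>
    ('a \<Rightarrow> 'x::ab_group_add \<Rightarrow> 'x) \<Rightarrow> 'x set \<Rightarrow> nat \<Rightarrow> bool" where
  "Ext_vanishes sM sX N i \<longleftrightarrow>
     (\<forall>b d g. free_resolution sM b d g \<longrightarrow>
        (\<forall>y\<in>ftup N (b i). ext_map sX b d (Suc i) y = (\<lambda>_. 0) \<longrightarrow>
           (if i = 0 then y = (\<lambda>_. 0)
            else (\<exists>z\<in>ftup N (b (i - 1)). y = ext_map sX b d i z))))"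

text \<open>pd_R M < t: M has a finite free (= projective, R local, M f.g.) resolution with
  F_i = 0 for all i >= t. (For M = 0, pd = -infinity, and b = 0 works.)\<close>
definition pd_less :: "('a::comm_ring_1 \<Rightarrow> 'n::ab_group_add \<Rightarrow> 'n) \<Rightarrow> nat \<Rightarrow> bool" where
  "pd_less sM t \<longleftrightarrow> (\<exists>b d g. free_resolution sM b d g \<and> (\<forall>i\<ge>t. b i = 0))"

end

theory Submission
  imports Defs "HOL-Library.Function_Algebras"
begin

(* Take a free resolution F of M whose differentials have all entries in m: choosing a minimal
   generating family at every step achieves this, since a relation with a unit coefficient makes
   one generator redundant, and the Noetherian hypothesis keeps all syzygy modules finitely
   generated. Suppose rank F_t > 0 and pick r in m and x in (N :_X m) with r x not in mN (Burch).
   The vector y = x e_0 of X^(rank F_t) is mapped by the differential to a (co)cycle with entries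
   in N, so vanishing in the neighbouring degree writes that image as the image of some z in
   N^(rank F_t). Then r (y - z) is a (co)cycle with entries in N, hence a (co)boundary by vanishing
   in degree t, so its entries lie in mN. Its first entry is r x - r z_0 with r z_0 in mN, whence
   r x in mN, a contradiction. So F_t = 0 and truncating F at t shows pd M < t. *)

definition scale_vec :: "'a::comm_ring_1 \<Rightarrow> (nat \<Rightarrow> 'a) \<Rightarrow> nat \<Rightarrow> 'a" where
  "scale_vec r v = (\<lambda>j. r * v j)"

lemma scale_vec_apply [simp]: "scale_vec r v j = r * v j"
  by (simp add: scale_vec_def)

lemma module_scale_vec: "module (scale_vec :: 'a::comm_ring_1 \<Rightarrow> _)"
  by unfold_locales (auto simp: fun_eq_iff algebra_simps)

lemma module_mult: "module ((*) :: 'a::comm_ring_1 \<Rightarrow> _)"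
  by unfold_locales (auto simp: algebra_simps)

lemma module_hom_coordinate: "module_hom scale_vec (*) (\<lambda>v::nat \<Rightarrow> 'a::comm_ring_1. v n)"
  by (rule module_hom.intro[OF module_scale_vec module_mult]) (unfold_locales, auto)

lemma sum_fun_apply: "(\<Sum>k\<in>A. (f k :: 'b \<Rightarrow> 'c::comm_monoid_add)) j = (\<Sum>k\<in>A. f k j)"
  by (induction A rule: infinite_finite_induct) auto

section \<open>Minimal generating families\<close>

definition generating_family ::
    "('a::comm_ring_1 \<Rightarrow> 'b::ab_group_add \<Rightarrow> 'b) \<Rightarrow> 'b set \<Rightarrow> ('i \<Rightarrow> 'b) \<Rightarrow> 'i set \<Rightarrow> bool" where
  "generating_family s K G A \<longleftrightarrow>
     finite A \<and> (\<forall>k\<in>A. G k \<in> K) \<and> (\<forall>x\<in>K. \<exists>c. (\<Sum>k\<in>A. s (c k) (G k)) = x)"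

lemma generating_family_reindex_nat:
  assumes "generating_family s K G A"
  obtains G' where "generating_family s K G' {..<card A}"
proof -
  have "finite A" using assms by (simp add: generating_family_def)
  then obtain h where h: "bij_betw h {..<card A} A"
    using ex_bij_betw_nat_finite by (auto simp: atLeast0LessThan)
  have "generating_family s K (G \<circ> h) {..<card A}"
    unfolding generating_family_def
  proof (intro conjI ballI)
    fix k assume "k \<in> {..<card A}"
    then show "(G \<circ> h) k \<in> K" using h assms by (auto simp: bij_betw_def generating_family_def)
  next
    fix x assume "x \<in> K"
    then obtain c where "(\<Sum>k\<in>A. s (c k) (G k)) = x"
      using assms by (auto simp: generating_family_def)
    then have "(\<Sum>k\<in>{..<card A}. s (c (h k)) ((G \<circ> h) k)) = x"
      using sum.reindex_bij_betw[OF h, of "\<lambda>k. s (c k) (G k)"] by simp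
    then show "\<exists>c. (\<Sum>k\<in>{..<card A}. s (c k) ((G \<circ> h) k)) = x"
      by (intro exI[of _ "c \<circ> h"]) simp
  qed simp
  then show thesis by (rule that)
qed

definition minimal_generating_family ::
    "('a::comm_ring_1 \<Rightarrow> 'b::ab_group_add \<Rightarrow> 'b) \<Rightarrow> 'b set \<Rightarrow> nat \<Rightarrow> (nat \<Rightarrow> 'b) \<Rightarrow> bool" where
  "minimal_generating_family s K m G \<longleftrightarrow>
     generating_family s K G {..<m} \<and> (\<forall>m' G'. generating_family s K G' {..<m'} \<longrightarrow> m \<le> m')"

definition min_rank :: "('a::comm_ring_1 \<Rightarrow> 'b::ab_group_add \<Rightarrow> 'b) \<Rightarrow> 'b set \<Rightarrow> nat" where
  "min_rank s K = (LEAST m. \<exists>G. generating_family s K G {..<m})"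

definition min_gen :: "('a::comm_ring_1 \<Rightarrow> 'b::ab_group_add \<Rightarrow> 'b) \<Rightarrow> 'b set \<Rightarrow> nat \<Rightarrow> 'b" where
  "min_gen s K = (SOME G. generating_family s K G {..<min_rank s K})"

lemma minimal_generating_family_min_gen:
  assumes "generating_family s K G A"
  shows "minimal_generating_family s K (min_rank s K) (min_gen s K)"
proof -
  let ?P = "\<lambda>m. \<exists>G. generating_family s K G {..<m}"
  have "?P (card A)" using generating_family_reindex_nat[OF assms] by blast
  then have "?P (min_rank s K)" unfolding min_rank_def by (rule LeastI)
  then have "generating_family s K (min_gen s K) {..<min_rank s K}"
    unfolding min_gen_def by (rule someI_ex)
  then show ?thesis
    by (auto simp: minimal_generating_family_def min_rank_def intro: Least_le)
qed

definition relations ::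
    "('a::comm_ring_1 \<Rightarrow> 'b::ab_group_add \<Rightarrow> 'b) \<Rightarrow> nat \<Rightarrow> (nat \<Rightarrow> 'b) \<Rightarrow> (nat \<Rightarrow> 'a) set" where
  "relations s m G = {c \<in> fvec m. (\<Sum>k<m. s (c k) (G k)) = 0}"

lemma subspace_relations:
  assumes "module s"
  shows "module.subspace scale_vec (relations s m G)"
proof -
  interpret module s by fact
  have "(\<Sum>k<m. s (a * c k) (G k)) = s a (\<Sum>k<m. s (c k) (G k))" for a c
    by (simp add: scale_sum_right)
  then show ?thesis
    unfolding relations_def module.subspace_def[OF module_scale_vec]
    by (auto simp: fvec_def scale_left_distrib sum.distrib)
qed

text \<open>If \<open>c k\<close> were a unit, \<open>G k\<close> would be a combination of the other generators, which
  would then form a smaller generating family.\<close>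
lemma minimal_generating_family_relations_nonunit:
  assumes "module s" and min: "minimal_generating_family s K m G"
    and "c \<in> relations s m G" and k: "k < m"
  shows "c k \<in> maxid"
proof (rule ccontr)
  interpret module s by fact
  have rel: "(\<Sum>l<m. s (c l) (G l)) = 0" using \<open>c \<in> relations s m G\<close> by (simp add: relations_def)
  assume "c k \<notin> maxid"
  then obtain u where u: "1 = c k * u" by (auto simp: maxid_def dvd_def)
  let ?B = "{..<m} - {k}"
  have split_k: "(\<Sum>l<m. s (f l) (G l)) = s (f k) (G k) + (\<Sum>l\<in>?B. s (f l) (G l))" for f
    using sum.remove[of "{..<m}" k "\<lambda>l. s (f l) (G l)"] k by simp
  have "generating_family s K G ?B"
    unfolding generating_family_def
  proof (intro conjI ballI)
    fix l assume "l \<in> ?B"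
    then show "G l \<in> K" using min by (auto simp: minimal_generating_family_def generating_family_def)
  next
    fix x assume "x \<in> K"
    then obtain c' where c': "(\<Sum>l<m. s (c' l) (G l)) = x"
      using min by (auto simp: minimal_generating_family_def generating_family_def)
    have rel_B: "(\<Sum>l\<in>?B. s (c l) (G l)) = - s (c k) (G k)"
      using split_k[of c] rel by (simp add: eq_neg_iff_add_eq_0 add.commute)
    have "(\<Sum>l\<in>?B. s (c' l - c' k * u * c l) (G l))
        = (\<Sum>l\<in>?B. s (c' l) (G l)) - s (c' k * u) (\<Sum>l\<in>?B. s (c l) (G l))"
      by (simp add: scale_left_diff_distrib sum_subtractf scale_sum_right)
    also have "\<dots> = (\<Sum>l\<in>?B. s (c' l) (G l)) + s (c' k * u * c k) (G k)"
      using rel_B by simp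
    also have "\<dots> = x"
      using u split_k[of c'] c' by (simp add: mult.assoc mult.commute[of u] add.commute)
    finally show "\<exists>e. (\<Sum>l\<in>?B. s (e l) (G l)) = x"
      by (intro exI[of _ "\<lambda>l. c' l - c' k * u * c l"])
  qed simp
  then obtain G' where "generating_family s K G' {..<card ?B}"
    by (rule generating_family_reindex_nat)
  moreover have "card ?B < m" using k by simp
  ultimately show False using min by (auto simp: minimal_generating_family_def dest: leD)
qed

lemma generating_family_mem_iff:
  assumes "generating_family scale_vec K G {..<m}" and "module.subspace scale_vec K"
  shows "v \<in> K \<longleftrightarrow> (\<exists>w\<in>fvec m. v = (\<Sum>k<m. scale_vec (w k) (G k)))"
proof
  assume "v \<in> K"
  then obtain c where c: "(\<Sum>k<m. scale_vec (c k) (G k)) = v"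
    using assms(1) by (auto simp: generating_family_def)
  show "\<exists>w\<in>fvec m. v = (\<Sum>k<m. scale_vec (w k) (G k))"
    by (rule bexI[of _ "\<lambda>k. if k < m then c k else 0"]) (use c in \<open>auto simp: fvec_def\<close>)
next
  interpret V: module "scale_vec :: 'a::comm_ring_1 \<Rightarrow> _" by (rule module_scale_vec)
  assume "\<exists>w\<in>fvec m. v = (\<Sum>k<m. scale_vec (w k) (G k))"
  then show "v \<in> K"
    using assms by (auto intro!: V.subspace_sum V.subspace_scale simp: generating_family_def)
qed

section \<open>Submodules of finite free modules over a Noetherian ring\<close>

lemma generating_family_from_coordinate:
  assumes K: "module.subspace scale_vec K"
    and gen0: "generating_family scale_vec {v\<in>K. v n = 0} G0 A0"
    and S: "finite S" "module.span (*) S = (\<lambda>v. v n) ` K"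
  obtains G and m :: nat where "generating_family scale_vec (K :: (nat \<Rightarrow> 'a::comm_ring_1) set) G {..<m}"
proof -
  interpret V: module "scale_vec :: 'a \<Rightarrow> _" by (rule module_scale_vec)
  interpret R: module "(*) :: 'a \<Rightarrow> _" by (rule module_mult)
  have "S \<subseteq> (\<lambda>v. v n) ` K" using R.span_superset[of S] S(2) by simp
  then have "\<forall>a\<in>S. \<exists>v. v \<in> K \<and> v n = a" by fastforce
  then obtain h where h: "\<And>a. a \<in> S \<Longrightarrow> h a \<in> K \<and> h a n = a" by metis
  define G where "G = case_sum G0 h"
  define A where "A = Inl ` A0 \<union> Inr ` S"
  have "generating_family scale_vec K G A"
    unfolding generating_family_def
  proof (intro conjI ballI)
    show "finite A" using gen0 S(1) by (auto simp: A_def generating_family_def)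
  next
    fix i assume "i \<in> A"
    then show "G i \<in> K" using gen0 h by (auto simp: A_def G_def generating_family_def)
  next
    fix x assume x: "x \<in> K"
    then have "x n \<in> R.span S" by (simp add: S(2))
    then obtain u where u: "x n = (\<Sum>a\<in>S. u a * a)" using R.span_finite[OF S(1)] by auto
    define y where "y = x - (\<Sum>a\<in>S. scale_vec (u a) (h a))"
    have "y \<in> K" unfolding y_def
      using h by (intro V.subspace_diff[OF K x] V.subspace_sum[OF K] V.subspace_scale[OF K]) auto
    moreover have "y n = 0" unfolding y_def using u h by (simp add: sum_fun_apply)
    ultimately obtain c where c: "(\<Sum>a\<in>A0. scale_vec (c a) (G0 a)) = y"
      using gen0 by (auto simp: generating_family_def)
    have "(\<Sum>i\<in>A. scale_vec (case_sum c u i) (G i))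
        = (\<Sum>i\<in>Inl ` A0. scale_vec (case_sum c u i) (G i))
          + (\<Sum>i\<in>Inr ` S. scale_vec (case_sum c u i) (G i))"
      unfolding A_def using gen0 S(1)
      by (intro sum.union_disjoint) (auto simp: generating_family_def)
    also have "\<dots> = (\<Sum>a\<in>A0. scale_vec (c a) (G0 a)) + (\<Sum>a\<in>S. scale_vec (u a) (h a))"
      by (simp add: sum.reindex G_def)
    also have "\<dots> = x" using c by (simp add: y_def)
    finally show "\<exists>c. (\<Sum>i\<in>A. scale_vec (c i) (G i)) = x"
      by (intro exI[of _ "case_sum c u"])
  qed
  then obtain G' where "generating_family scale_vec K G' {..<card A}"
    by (rule generating_family_reindex_nat)
  then show thesis by (rule that)
qed

lemma noetherian_submodule_generating_family:
  assumes "noetherian_ring TYPE('a::comm_ring_1)"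
  shows "K \<subseteq> fvec n \<Longrightarrow> module.subspace scale_vec K \<Longrightarrow>
    \<exists>(m::nat) G. generating_family scale_vec (K :: (nat \<Rightarrow> 'a) set) G {..<m}"
proof (induction n arbitrary: K)
  case 0
  then have "K \<subseteq> {0}" by (auto simp: fvec_def fun_eq_iff)
  then have "generating_family scale_vec K (\<lambda>_. 0) {..<0::nat}"
    by (auto simp: generating_family_def)
  then show ?case by blast
next
  case (Suc n)
  interpret V: module "scale_vec :: 'a \<Rightarrow> _" by (rule module_scale_vec)
  interpret coordinate: module_hom "scale_vec :: 'a \<Rightarrow> _" "(*)" "\<lambda>v. v n"
    by (rule module_hom_coordinate)
  have "{v\<in>K. v n = 0} \<subseteq> fvec n"
  proof
    fix v assume v: "v \<in> {v\<in>K. v n = 0}"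
    have "v k = 0" if "n \<le> k" for k
      using v Suc.prems(1) that by (cases "k = n") (auto simp: fvec_def)
    then show "v \<in> fvec n" by (simp add: fvec_def)
  qed
  moreover have "V.subspace {v\<in>K. v n = 0}"
    using V.subspace_inter[OF Suc.prems(2) coordinate.subspace_kernel] by (simp add: Int_def)
  ultimately have "\<exists>(m::nat) G. generating_family scale_vec {v\<in>K. v n = 0} G {..<m}"
    by (rule Suc.IH)
  then obtain G0 and m0 :: nat where "generating_family scale_vec {v\<in>K. v n = 0} G0 {..<m0}"
    by blast
  moreover obtain S where "finite S" "module.span (*) S = (\<lambda>v. v n) ` K"
    using assms[unfolded noetherian_ring_def, rule_format, OF coordinate.subspace_image[OF Suc.prems(2)]]
    by blast
  ultimately obtain G and m :: nat where "generating_family scale_vec K G {..<m}"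
    by (rule generating_family_from_coordinate[OF Suc.prems(2)])
  then show ?case by blast
qed

section \<open>Minimal free resolutions\<close>

definition minimal_differentials ::
    "(nat \<Rightarrow> nat) \<Rightarrow> (nat \<Rightarrow> nat \<Rightarrow> nat \<Rightarrow> 'a::comm_ring_1) \<Rightarrow> bool" where
  "minimal_differentials b d \<longleftrightarrow> (\<forall>i\<ge>1. \<forall>j<b (i - 1). \<forall>k<b i. d i j k \<in> maxid)"

primrec syzygy :: "('a::comm_ring_1 \<Rightarrow> 'n::ab_group_add \<Rightarrow> 'n) \<Rightarrow> nat \<Rightarrow> (nat \<Rightarrow> 'a) set" where
  "syzygy sM 0 = relations sM (min_rank sM UNIV) (min_gen sM UNIV)"
| "syzygy sM (Suc i) =
     relations scale_vec (min_rank scale_vec (syzygy sM i)) (min_gen scale_vec (syzygy sM i))"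

fun min_res_rank :: "('a::comm_ring_1 \<Rightarrow> 'n::ab_group_add \<Rightarrow> 'n) \<Rightarrow> nat \<Rightarrow> nat" where
  "min_res_rank sM 0 = min_rank sM UNIV"
| "min_res_rank sM (Suc i) = min_rank scale_vec (syzygy sM i)"

text \<open>The columns of the \<open>i\<close>-th differential are the chosen generators of the \<open>(i - 1)\<close>-th
  syzygy module.\<close>
fun min_res_diff ::
    "('a::comm_ring_1 \<Rightarrow> 'n::ab_group_add \<Rightarrow> 'n) \<Rightarrow> nat \<Rightarrow> nat \<Rightarrow> nat \<Rightarrow> 'a" where
  "min_res_diff sM 0 = (\<lambda>j k. 0)"
| "min_res_diff sM (Suc i) = (\<lambda>j k. min_gen scale_vec (syzygy sM i) k j)"

lemma syzygy_subset_fvec: "syzygy sM i \<subseteq> fvec (min_res_rank sM i)"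
  by (cases i) (auto simp: relations_def)

lemma subspace_syzygy: "module sM \<Longrightarrow> module.subspace scale_vec (syzygy sM i)"
  by (cases i) (simp_all add: subspace_relations module_scale_vec)

lemma minimal_generating_family_module:
  assumes "module sM" and "fin_gen sM"
  shows "minimal_generating_family sM UNIV (min_res_rank sM 0) (min_gen sM UNIV)"
proof -
  interpret module sM by fact
  obtain S where S: "finite S" "span S = UNIV" using \<open>fin_gen sM\<close> by (auto simp: fin_gen_def)
  have "generating_family sM UNIV id S"
    using S span_finite[OF S(1)] by (auto simp: generating_family_def surj_def) (metis)
  then show ?thesis by (simp add: minimal_generating_family_min_gen)
qed

lemma minimal_generating_family_syzygy:
  assumes "noetherian_ring TYPE('a::comm_ring_1)" and "module sM"
  shows "minimal_generating_family scale_vec (syzygy sM i) (min_res_rank sM (Suc i))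
    (min_gen scale_vec (syzygy (sM :: 'a \<Rightarrow> 'n::ab_group_add \<Rightarrow> 'n) i))"
proof -
  obtain G and m :: nat where "generating_family scale_vec (syzygy sM i) G {..<m}"
    using noetherian_submodule_generating_family[OF assms(1) syzygy_subset_fvec
        subspace_syzygy[OF assms(2)]] by blast
  then show ?thesis by (simp add: minimal_generating_family_min_gen)
qed

lemma dmap_min_res:
  assumes "noetherian_ring TYPE('a::comm_ring_1)" and "module sM"
  shows "dmap (min_res_rank sM) (min_res_diff sM) (Suc i) w =
    (\<Sum>k<min_res_rank sM (Suc i).
       scale_vec (w k) (min_gen scale_vec (syzygy (sM :: 'a \<Rightarrow> 'n::ab_group_add \<Rightarrow> 'n) i) k))"
proof
  fix j
  have "min_gen scale_vec (syzygy sM i) k \<in> fvec (min_res_rank sM i)" if "k < min_res_rank sM (Suc i)" for k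
    using minimal_generating_family_syzygy[OF assms, of i] syzygy_subset_fvec[of sM i] that
    by (auto simp: minimal_generating_family_def generating_family_def)
  then show "dmap (min_res_rank sM) (min_res_diff sM) (Suc i) w j =
      (\<Sum>k<min_res_rank sM (Suc i). scale_vec (w k) (min_gen scale_vec (syzygy sM i) k)) j"
    by (auto simp: dmap_def sum_fun_apply mult.commute fvec_def intro!: sum.neutral)
qed

lemma syzygy_eq_image_dmap:
  assumes "noetherian_ring TYPE('a::comm_ring_1)" and "module sM"
  shows "v \<in> syzygy (sM :: 'a \<Rightarrow> 'n::ab_group_add \<Rightarrow> 'n) i \<longleftrightarrow>
    (\<exists>w\<in>fvec (min_res_rank sM (Suc i)). v = dmap (min_res_rank sM) (min_res_diff sM) (Suc i) w)"
  using generating_family_mem_iff[OF conjunct1[OF minimal_generating_family_syzygy[OF assms,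
        unfolded minimal_generating_family_def]] subspace_syzygy[OF assms(2)]]
  by (simp add: dmap_min_res[OF assms])

lemma free_resolution_min_res:
  assumes "noetherian_ring TYPE('a::comm_ring_1)" and "module sM" and "fin_gen sM"
  shows "free_resolution sM (min_res_rank sM) (min_res_diff sM)
    (min_gen (sM :: 'a \<Rightarrow> 'n::ab_group_add \<Rightarrow> 'n) UNIV)"
  unfolding free_resolution_def
proof (intro conjI allI ballI impI)
  fix m
  obtain c where c: "(\<Sum>k<min_res_rank sM 0. sM (c k) (min_gen sM UNIV k)) = m"
    using minimal_generating_family_module[OF assms(2,3)]
    by (auto simp: minimal_generating_family_def generating_family_def)
  show "\<exists>v\<in>fvec (min_res_rank sM 0). augm sM (min_res_rank sM) (min_gen sM UNIV) v = m"
    by (rule bexI[of _ "\<lambda>k. if k < min_res_rank sM 0 then c k else 0"])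
      (use c in \<open>auto simp: fvec_def augm_def\<close>)
next
  fix v :: "nat \<Rightarrow> 'a" assume "v \<in> fvec (min_res_rank sM 0)"
  then show "augm sM (min_res_rank sM) (min_gen sM UNIV) v = 0 \<longleftrightarrow>
      (\<exists>w\<in>fvec (min_res_rank sM 1). v = dmap (min_res_rank sM) (min_res_diff sM) 1 w)"
    using syzygy_eq_image_dmap[OF assms(1,2), of v 0] by (simp add: relations_def augm_def)
next
  fix i and v :: "nat \<Rightarrow> 'a" assume "1 \<le> i" and v: "v \<in> fvec (min_res_rank sM i)"
  then obtain i' where i': "i = Suc i'" by (cases i) auto
  show "dmap (min_res_rank sM) (min_res_diff sM) i v = (\<lambda>_. 0) \<longleftrightarrow>
      (\<exists>w\<in>fvec (min_res_rank sM (Suc i)). v = dmap (min_res_rank sM) (min_res_diff sM) (Suc i) w)"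
    using syzygy_eq_image_dmap[OF assms(1,2), of v i] v
    by (simp add: i' relations_def dmap_min_res[OF assms(1,2)] zero_fun_def)
qed

lemma minimal_differentials_min_res:
  assumes "noetherian_ring TYPE('a::comm_ring_1)" and "module sM" and "fin_gen sM"
  shows "minimal_differentials (min_res_rank sM) (min_res_diff (sM :: 'a \<Rightarrow> 'n::ab_group_add \<Rightarrow> 'n))"
  unfolding minimal_differentials_def
proof (intro allI impI)
  fix i j k assume "1 \<le> i" "j < min_res_rank sM (i - 1)" "k < min_res_rank sM i"
  then obtain i' where i': "i = Suc i'" "j < min_res_rank sM i'" "k < min_res_rank sM (Suc i')"
    by (cases i) auto
  have column: "min_gen scale_vec (syzygy sM i') k \<in> syzygy sM i'"
    using minimal_generating_family_syzygy[OF assms(1,2)] i'(3)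
    by (auto simp: minimal_generating_family_def generating_family_def)
  have "min_gen scale_vec (syzygy sM i') k j \<in> maxid"
  proof (cases i')
    case 0
    with column have "min_gen scale_vec (syzygy sM i') k
        \<in> relations sM (min_res_rank sM 0) (min_gen sM UNIV)"
      by simp
    from minimal_generating_family_relations_nonunit[OF assms(2)
        minimal_generating_family_module[OF assms(2,3)] this] show ?thesis
      using i'(2) 0 by simp
  next
    case (Suc i'')
    with column have "min_gen scale_vec (syzygy sM i') k
        \<in> relations scale_vec (min_res_rank sM (Suc i'')) (min_gen scale_vec (syzygy sM i''))"
      by simp
    from minimal_generating_family_relations_nonunit[OF module_scale_vec
        minimal_generating_family_syzygy[OF assms(1,2)] this] show ?thesis
      using i'(2) Suc by simp
  qed
  then show "min_res_diff sM i j k \<in> maxid" by (simp add: i'(1))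
qed

section \<open>The complexes computing Tor and Ext\<close>

lemma free_resolution_diff_comp:
  assumes "free_resolution sM b d g" and "1 \<le> i" and "j < b (i - 1)" and "k < b (Suc i)"
  shows "(\<Sum>l<b i. d i j l * d (Suc i) l k) = 0"
proof -
  define e :: "nat \<Rightarrow> 'a::comm_ring_1" where "e = (\<lambda>l. if l = k then 1 else 0)"
  define v where "v = dmap b d (Suc i) e"
  have "e \<in> fvec (b (Suc i))" using \<open>k < b (Suc i)\<close> by (auto simp: e_def fvec_def)
  moreover have "v \<in> fvec (b i)" by (auto simp: v_def dmap_def fvec_def)
  ultimately have "dmap b d i v = (\<lambda>_. 0)"
    using assms(1,2) unfolding free_resolution_def v_def by blast
  then have "dmap b d i v j = 0" by simp
  moreover have "v l = (if l < b i then d (Suc i) l k else 0)" for l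
    using \<open>k < b (Suc i)\<close> by (simp add: v_def dmap_def e_def if_distrib[of "\<lambda>x. _ * x"] cong: if_cong)
  ultimately show ?thesis using \<open>j < b (i - 1)\<close> by (simp add: dmap_def)
qed

lemma tor_map_comp:
  assumes "module sX" and "free_resolution sM b d g" and "1 \<le> i"
  shows "tor_map sX b d i (tor_map sX b d (Suc i) y) = (\<lambda>_. 0)"
proof
  interpret X: module sX by fact
  fix j
  show "tor_map sX b d i (tor_map sX b d (Suc i) y) j = 0"
  proof (cases "j < b (i - 1)")
    case True
    have "tor_map sX b d i (tor_map sX b d (Suc i) y) j
        = (\<Sum>l<b i. \<Sum>k<b (Suc i). sX (d i j l * d (Suc i) l k) (y k))"
      using True by (simp add: tor_map_def X.scale_sum_right)
    also have "\<dots> = (\<Sum>k<b (Suc i). sX (\<Sum>l<b i. d i j l * d (Suc i) l k) (y k))"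
      by (simp add: sum.swap[of _ "{..<b i}"] X.scale_sum_left)
    also have "\<dots> = 0"
      using free_resolution_diff_comp[OF assms(2,3) True] by simp
    finally show ?thesis .
  qed (simp add: tor_map_def)
qed

lemma ext_map_comp:
  assumes "module sX" and "free_resolution sM b d g"
  shows "ext_map sX b d (Suc (Suc i)) (ext_map sX b d (Suc i) y) = (\<lambda>_. 0)"
proof
  interpret X: module sX by fact
  fix k
  show "ext_map sX b d (Suc (Suc i)) (ext_map sX b d (Suc i) y) k = 0"
  proof (cases "k < b (Suc (Suc i))")
    case True
    have "ext_map sX b d (Suc (Suc i)) (ext_map sX b d (Suc i) y) k
        = (\<Sum>j<b (Suc i). \<Sum>l<b i. sX (d (Suc i) l j * d (Suc (Suc i)) j k) (y l))"
      using True by (simp add: ext_map_def X.scale_sum_right mult.commute)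
    also have "\<dots> = (\<Sum>l<b i. sX (\<Sum>j<b (Suc i). d (Suc i) l j * d (Suc (Suc i)) j k) (y l))"
      by (simp add: sum.swap[of _ "{..<b (Suc i)}"] X.scale_sum_left)
    also have "\<dots> = 0"
      using free_resolution_diff_comp[OF assms(2) _ _ True] by simp
    finally show ?thesis .
  qed (simp add: ext_map_def)
qed

lemma tor_map_scale_diff:
  assumes "module sX"
  shows "tor_map sX b d i (\<lambda>l. sX r (y l - z l)) =
    (\<lambda>j. sX r (tor_map sX b d i y j - tor_map sX b d i z j))"
proof -
  interpret X: module sX by fact
  show ?thesis
    by (simp add: tor_map_def fun_eq_iff X.scale_right_diff_distrib X.scale_sum_right
        sum_subtractf mult.commute)
qed

lemma ext_map_scale_diff:
  assumes "module sX"
  shows "ext_map sX b d i (\<lambda>l. sX r (y l - z l)) =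
    (\<lambda>k. sX r (ext_map sX b d i y k - ext_map sX b d i z k))"
proof -
  interpret X: module sX by fact
  show ?thesis
    by (simp add: ext_map_def fun_eq_iff X.scale_right_diff_distrib X.scale_sum_right
        sum_subtractf mult.commute)
qed

lemma tor_map_ftup:
  assumes "module sX" and B: "module.subspace sX B"
    and AB: "\<And>a v. a \<in> maxid \<Longrightarrow> v \<in> A \<Longrightarrow> sX a v \<in> B"
    and "minimal_differentials b d" and "1 \<le> i" and "y \<in> ftup A (b i)"
  shows "tor_map sX b d i y \<in> ftup B (b (i - 1))"
proof -
  interpret X: module sX by fact
  show ?thesis
    using assms(4-6) X.subspace_0[OF B]
    by (auto simp: ftup_def tor_map_def minimal_differentials_def intro!: X.subspace_sum[OF B] AB)
qed

lemma ext_map_ftup: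
  assumes "module sX" and B: "module.subspace sX B"
    and AB: "\<And>a v. a \<in> maxid \<Longrightarrow> v \<in> A \<Longrightarrow> sX a v \<in> B"
    and "minimal_differentials b d" and "1 \<le> i" and "y \<in> ftup A (b (i - 1))"
  shows "ext_map sX b d i y \<in> ftup B (b i)"
proof -
  interpret X: module sX by fact
  show ?thesis
    using assms(4-6) X.subspace_0[OF B]
    by (auto simp: ftup_def ext_map_def minimal_differentials_def intro!: X.subspace_sum[OF B] AB)
qed

section \<open>The Burch obstruction\<close>

lemma subspace_ideal_times: "module sX \<Longrightarrow> module.subspace sX (ideal_times sX I L)"
  by (simp add: ideal_times_def module.subspace_span)

lemma ideal_times_scale:
  assumes "module sX" and "r \<in> I" and "x \<in> L"
  shows "sX r x \<in> ideal_times sX I L"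
  unfolding ideal_times_def using assms by (blast intro: module.span_base)

lemma colon_max_scale: "r \<in> maxid \<Longrightarrow> x \<in> colon_max sX N \<Longrightarrow> sX r x \<in> N"
  by (simp add: colon_max_def)

lemma burch_submodule_witness:
  assumes "module sX" and "burch_submodule sX N"
  obtains r x where "r \<in> maxid" and "x \<in> colon_max sX N"
    and "sX r x \<notin> ideal_times sX maxid N"
proof (rule ccontr)
  interpret X: module sX by fact
  assume "\<not> thesis"
  with that have "sX r x \<in> ideal_times sX maxid N" if "r \<in> maxid" "x \<in> colon_max sX N" for r x
    using that by blast
  then have "ideal_times sX maxid (colon_max sX N) \<subseteq> ideal_times sX maxid N"
    unfolding ideal_times_def[of _ _ "colon_max sX N"]
    by (intro X.span_minimal subspace_ideal_times[OF assms(1)]) blast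
  moreover have "N \<subseteq> colon_max sX N"
    using assms(2) by (auto simp: burch_submodule_def colon_max_def X.subspace_scale)
  then have "ideal_times sX maxid N \<subseteq> ideal_times sX maxid (colon_max sX N)"
    unfolding ideal_times_def by (intro X.span_mono) blast
  ultimately show False using assms(2) by (simp add: burch_submodule_def)
qed

text \<open>An abstract form of the argument: \<open>\<phi>\<close> is the differential out of the position of
  \<open>F\<^sub>t\<close> in the complex, \<open>\<psi>\<close> the one into it.\<close>
lemma burch_obstruction:
  fixes \<phi> \<psi> :: "(nat \<Rightarrow> 'x::ab_group_add) \<Rightarrow> nat \<Rightarrow> 'x"
  assumes "module sX" and "burch_submodule sX N" and "0 < n"
    and scale_diff: "\<And>r y z. \<phi> (\<lambda>l. sX r (y l - z l)) = (\<lambda>j. sX r (\<phi> y j - \<phi> z j))"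
    and lift: "\<And>y. y \<in> ftup (colon_max sX N) n \<Longrightarrow> \<exists>z\<in>ftup N n. \<phi> y = \<phi> z"
    and exact: "\<And>w. w \<in> ftup N n \<Longrightarrow> \<phi> w = (\<lambda>_. 0) \<Longrightarrow> \<exists>u\<in>ftup N m. w = \<psi> u"
    and minimal: "\<And>u. u \<in> ftup N m \<Longrightarrow> \<psi> u \<in> ftup (ideal_times sX maxid N) n"
  shows False
proof -
  interpret X: module sX by fact
  have N: "X.subspace N" using assms(2) by (simp add: burch_submodule_def)
  obtain r x where r: "r \<in> maxid" and x: "x \<in> colon_max sX N"
    and rx: "sX r x \<notin> ideal_times sX maxid N"
    using burch_submodule_witness[OF assms(1,2)] .
  define y where "y = (\<lambda>l::nat. if l = 0 then x else 0)"
  have "0 \<in> colon_max sX N" by (simp add: colon_max_def X.subspace_0[OF N])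
  then have "y \<in> ftup (colon_max sX N) n" using x \<open>0 < n\<close> by (auto simp: y_def ftup_def)
  then obtain z where z: "z \<in> ftup N n" and "\<phi> y = \<phi> z" using lift by blast
  define w where "w = (\<lambda>l. sX r (y l - z l))"
  have "sX r (y l) \<in> N" for l
    using \<open>y \<in> ftup _ n\<close> by (auto simp: ftup_def intro: colon_max_scale[OF r])
  moreover have "sX r (z l) \<in> N" for l using z X.subspace_scale[OF N] by (simp add: ftup_def)
  ultimately have "w \<in> ftup N n"
    using \<open>y \<in> ftup _ n\<close> z by (auto simp: w_def ftup_def X.scale_right_diff_distrib X.subspace_diff[OF N])
  moreover have "\<phi> w = (\<lambda>_. 0)" using \<open>\<phi> y = \<phi> z\<close> by (simp add: w_def scale_diff)
  ultimately obtain u where "u \<in> ftup N m" and "w = \<psi> u" using exact by blast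
  then have "w 0 \<in> ideal_times sX maxid N" using minimal by (auto simp: ftup_def)
  moreover have "sX r (z 0) \<in> ideal_times sX maxid N"
    using z by (intro ideal_times_scale[OF assms(1) r]) (simp add: ftup_def)
  ultimately have "w 0 + sX r (z 0) \<in> ideal_times sX maxid N"
    by (rule X.subspace_add[OF subspace_ideal_times[OF assms(1)]])
  then show False using rx by (simp add: w_def y_def X.scale_right_diff_distrib)
qed

lemma Tor_vanishing_imp_rank_zero:
  assumes "module sX" and "burch_submodule sX N"
    and res: "free_resolution sM b d g" and min: "minimal_differentials b d" and "1 \<le> t"
    and Tor_t: "Tor_vanishes sM sX N t" and Tor_t1: "Tor_vanishes sM sX N (t - 1)"
  shows "b t = 0"
proof (rule ccontr)
  interpret X: module sX by fact
  have N: "X.subspace N" using assms(2) by (simp add: burch_submodule_def)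
  assume "b t \<noteq> 0"
  show False
  proof (rule burch_obstruction[OF assms(1,2),
        of "b t" "tor_map sX b d t" "b (Suc t)" "tor_map sX b d (Suc t)"])
    fix y assume "y \<in> ftup (colon_max sX N) (b t)"
    then have "tor_map sX b d t y \<in> ftup N (b (t - 1))"
      using tor_map_ftup[OF assms(1) N colon_max_scale[where sX = sX and N = N] min \<open>1 \<le> t\<close>]
      by simp
    moreover have "t - 1 = 0 \<or> tor_map sX b d (t - 1) (tor_map sX b d t y) = (\<lambda>_. 0)"
      using tor_map_comp[OF assms(1) res, of "t - 1" y] \<open>1 \<le> t\<close> by (cases "t = 1") auto
    ultimately show "\<exists>z\<in>ftup N (b t). tor_map sX b d t y = tor_map sX b d t z"
      using Tor_t1[unfolded Tor_vanishes_def, rule_format, OF res] \<open>1 \<le> t\<close> by simp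
  next
    fix w assume "w \<in> ftup N (b t)" and "tor_map sX b d t w = (\<lambda>_. 0)"
    then show "\<exists>u\<in>ftup N (b (Suc t)). w = tor_map sX b d (Suc t) u"
      using Tor_t res unfolding Tor_vanishes_def by blast
  next
    fix u assume "u \<in> ftup N (b (Suc t))"
    then show "tor_map sX b d (Suc t) u \<in> ftup (ideal_times sX maxid N) (b t)"
      using tor_map_ftup[OF assms(1) subspace_ideal_times[OF assms(1)]
          ideal_times_scale[where I = maxid and L = N, OF assms(1)] min, where i = "Suc t"]
      by simp
  qed (use \<open>b t \<noteq> 0\<close> tor_map_scale_diff[OF assms(1)] in auto)
qed

lemma Ext_vanishing_imp_rank_zero:
  assumes "module sX" and "burch_submodule sX N"
    and res: "free_resolution sM b d g" and min: "minimal_differentials b d" and "1 \<le> t"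
    and Ext_t1: "Ext_vanishes sM sX N (t + 1)" and Ext_t: "Ext_vanishes sM sX N t"
  shows "b t = 0"
proof (rule ccontr)
  interpret X: module sX by fact
  have N: "X.subspace N" using assms(2) by (simp add: burch_submodule_def)
  assume "b t \<noteq> 0"
  show False
  proof (rule burch_obstruction[OF assms(1,2),
        of "b t" "ext_map sX b d (Suc t)" "b (t - 1)" "ext_map sX b d t"])
    fix y assume "y \<in> ftup (colon_max sX N) (b t)"
    then have "ext_map sX b d (Suc t) y \<in> ftup N (b (Suc t))"
      using ext_map_ftup[OF assms(1) N colon_max_scale[where sX = sX and N = N] min, where i = "Suc t"]
      by simp
    moreover have "ext_map sX b d (Suc (Suc t)) (ext_map sX b d (Suc t) y) = (\<lambda>_. 0)"
      by (rule ext_map_comp[OF assms(1) res])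
    ultimately show "\<exists>z\<in>ftup N (b t). ext_map sX b d (Suc t) y = ext_map sX b d (Suc t) z"
      using Ext_t1[unfolded Ext_vanishes_def, rule_format, OF res] by simp
  next
    fix w assume "w \<in> ftup N (b t)" and "ext_map sX b d (Suc t) w = (\<lambda>_. 0)"
    then show "\<exists>u\<in>ftup N (b (t - 1)). w = ext_map sX b d t u"
      using Ext_t[unfolded Ext_vanishes_def, rule_format, OF res] \<open>1 \<le> t\<close> by simp
  next
    fix u assume "u \<in> ftup N (b (t - 1))"
    then show "ext_map sX b d t u \<in> ftup (ideal_times sX maxid N) (b t)"
      using ext_map_ftup[OF assms(1) subspace_ideal_times[OF assms(1)]
          ideal_times_scale[where I = maxid and L = N, OF assms(1)] min \<open>1 \<le> t\<close>]
      by simp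
  qed (use \<open>b t \<noteq> 0\<close> ext_map_scale_diff[OF assms(1)] in auto)
qed

lemma free_resolution_truncate:
  assumes res: "free_resolution sM b d g" and "1 \<le> t" and "b t = 0"
  shows "free_resolution sM (\<lambda>i. if t \<le> i then 0 else b i) d g"
proof -
  define b' where "b' = (\<lambda>i. if t \<le> i then 0 else b i)"
  have b': "b' i = b i" if "i \<le> t" for i using that \<open>b t = 0\<close> by (auto simp: b'_def)
  have dmap: "dmap b' d i = dmap b d i" if "i \<le> t" for i
    using b'[OF that] b'[of "i - 1"] that by (simp add: dmap_def fun_eq_iff)
  have augm: "augm sM b' g = augm sM b g" using b'[of 0] by (simp add: augm_def fun_eq_iff)
  have "free_resolution sM b' d g"
    unfolding free_resolution_def
  proof (intro conjI allI impI ballI)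
    fix m show "\<exists>v\<in>fvec (b' 0). augm sM b' g v = m"
      using res b'[of 0] augm by (simp add: free_resolution_def)
  next
    fix v :: "nat \<Rightarrow> 'a" assume "v \<in> fvec (b' 0)"
    then show "augm sM b' g v = 0 \<longleftrightarrow> (\<exists>w\<in>fvec (b' 1). v = dmap b' d 1 w)"
      using res b'[of 0] b'[of 1] augm dmap[of 1] \<open>1 \<le> t\<close> by (simp add: free_resolution_def)
  next
    fix i and v :: "nat \<Rightarrow> 'a" assume i: "1 \<le> i" and v: "v \<in> fvec (b' i)"
    show "dmap b' d i v = (\<lambda>_. 0) \<longleftrightarrow> (\<exists>w\<in>fvec (b' (Suc i)). v = dmap b' d (Suc i) w)"
    proof (cases "i < t")
      case True
      then show ?thesis using res i v b'[of i] b'[of "Suc i"] dmap[of i] dmap[of "Suc i"]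
        by (simp add: free_resolution_def)
    next
      case False
      then have "b' i = 0" by (simp add: b'_def)
      then have "v = (\<lambda>_. 0)" using v by (auto simp: fvec_def)
      moreover have "(\<lambda>_. 0) \<in> fvec (b' (Suc i))" by (simp add: fvec_def)
      ultimately show ?thesis by (auto simp: dmap_def fun_eq_iff intro!: bexI[of _ "\<lambda>_. 0"])
    qed
  qed
  then show ?thesis by (simp add: b'_def)
qed

theorem proposition3p16:
  fixes sM :: "'a::comm_ring_1 \<Rightarrow> 'n::ab_group_add \<Rightarrow> 'n"
    and sX :: "'a \<Rightarrow> 'x::ab_group_add \<Rightarrow> 'x"
    and N :: "'x set"
    and t :: nat
  assumes "noetherian_ring TYPE('a)"
    and "local_ring TYPE('a)"
    and "module sX" and "fin_gen sX"
    and "burch_submodule sX N"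
    and "module sM" and "fin_gen sM"
    and "t \<ge> 1"
    and "(Tor_vanishes sM sX N t \<and> Tor_vanishes sM sX N (t - 1)) \<or>
         (Ext_vanishes sM sX N (t + 1) \<and> Ext_vanishes sM sX N t)"
  shows "pd_less sM t"
proof -
  let ?b = "min_res_rank sM"
  have res: "free_resolution sM ?b (min_res_diff sM) (min_gen sM UNIV)"
    by (rule free_resolution_min_res[OF assms(1,6,7)])
  have min: "minimal_differentials ?b (min_res_diff sM)"
    by (rule minimal_differentials_min_res[OF assms(1,6,7)])
  have "?b t = 0"
    using assms(9) Tor_vanishing_imp_rank_zero[OF assms(3,5) res min assms(8)]
      Ext_vanishing_imp_rank_zero[OF assms(3,5) res min assms(8)] by blast
  then have "free_resolution sM (\<lambda>i. if t \<le> i then 0 else ?b i) (min_res_diff sM) (min_gen sM UNIV)"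
    by (rule free_resolution_truncate[OF res assms(8)])
  then show ?thesis unfolding pd_less_def by fastforce
qed

end
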